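(* Fix $\alpha\in(0,1)$. Let $I=[a,b]\subset\mathbb{R}$ be a bounded closed interval and let $f^*\in C(I,\mathbb{R})$ be monotone. Then for every $\varepsilon>0$ there exist $L\in\mathbb{N}$ and a leaky-ReLU network $f_L\in\mathcal{N}_1(L)$ of width one such that $|f_L(x)-f^*(x)|\le\varepsilon$ for all $x\in I$.
   Context: Leaky-ReLU: $\sigma_\alpha(x)=\max(\alpha x,x)$. The class $\mathcal{N}_1(L)$ consists of all functions $f_L:\mathbb{R}\to\mathbb{R}$ given by $f_0(x)=w_0x+b_0$, $f_k(x)=w_k\sigma_\alpha(f_{k-1}(x))+b_k$, $k=1,\dots,L$, with arbitrary $w_k,b_k\in\mathbb{R}$. *)

theory Defs
  imports "HOL-Analysis.Analysis"
begin

definition leaky_relu :: "real \<Rightarrow> real \<Rightarrow> real" where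
  "leaky_relu \<alpha> x = max (\<alpha> * x) x"

fun net :: "real \<Rightarrow> (nat \<Rightarrow> real) \<Rightarrow> (nat \<Rightarrow> real) \<Rightarrow> nat \<Rightarrow> real \<Rightarrow> real" where
  "net \<alpha> w b 0 x = w 0 * x + b 0"
| "net \<alpha> w b (Suc k) x = w (Suc k) * leaky_relu \<alpha> (net \<alpha> w b k x) + b (Suc k)"

definition N1 :: "real \<Rightarrow> nat \<Rightarrow> (real \<Rightarrow> real) set" where
  "N1 \<alpha> L = {f. \<exists>w b. f = net \<alpha> w b L}"

end

theory Submission
  imports Defs
begin

text \<open>A leaky-ReLU neuron followed by an affine map realises a knee: the identity up to a
  point c and slope \<alpha> or 1/\<alpha> beyond it, so composing knees at the same point realises every
  slope \<alpha>^n or \<alpha>^(-n). Bending a strictly increasing network twice above its current last node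
  (first up, then down) makes it pass through any prescribed larger value while leaving it
  unchanged to the left. Hence width-one networks interpolate any strictly increasing data.
  A monotone continuous function is then approximated by interpolating its values on a fine
  grid, tilted slightly to be strictly increasing: between two nodes both functions are
  monotone, so the error is bounded by the error at the nodes plus the oscillation of the
  function on the cell.\<close>

lemma net_cong:
  assumes "\<And>i. i \<le> k \<Longrightarrow> w i = w' i \<and> b i = b' i"
  shows "net \<alpha> w b k x = net \<alpha> w' b' k x"
  using assms by (induction k) (auto simp: le_Suc_eq)

lemma affine_in_N1: "(\<lambda>x. c * x + d) \<in> N1 \<alpha> 0"
  unfolding N1_def by (intro CollectI exI[of _ "\<lambda>_. c"] exI[of _ "\<lambda>_. d"]) auto

lemma N1_affine:
  assumes "f \<in> N1 \<alpha> L"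
  shows "(\<lambda>x. c * f x + d) \<in> N1 \<alpha> L"
proof -
  obtain w b where f: "f = net \<alpha> w b L" using assms unfolding N1_def by blast
  define w' where "w' = w(L := c * w L)"
  define b' where "b' = b(L := c * b L + d)"
  have "(\<lambda>x. c * f x + d) = net \<alpha> w' b' L"
  proof (cases L)
    case 0
    then show ?thesis by (auto simp: f w'_def b'_def algebra_simps)
  next
    case (Suc k)
    have "net \<alpha> w' b' k x = net \<alpha> w b k x" for x
      by (rule net_cong) (auto simp: w'_def b'_def Suc)
    then show ?thesis by (auto simp: f Suc w'_def b'_def algebra_simps)
  qed
  then show ?thesis unfolding N1_def by blast
qed

lemma N1_leaky_relu:
  assumes "f \<in> N1 \<alpha> L"
  shows "(\<lambda>x. c * leaky_relu \<alpha> (f x) + d) \<in> N1 \<alpha> (Suc L)"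
proof -
  obtain w b where f: "f = net \<alpha> w b L" using assms unfolding N1_def by blast
  define w' where "w' = w(Suc L := c)"
  define b' where "b' = b(Suc L := d)"
  have "net \<alpha> w' b' L x = net \<alpha> w b L x" for x
    by (rule net_cong) (auto simp: w'_def b'_def)
  then have "(\<lambda>x. c * leaky_relu \<alpha> (f x) + d) = net \<alpha> w' b' (Suc L)"
    by (auto simp: f w'_def b'_def)
  then show ?thesis unfolding N1_def by blast
qed

definition nets :: "real \<Rightarrow> (real \<Rightarrow> real) set" where
  "nets \<alpha> = (\<Union>L. N1 \<alpha> L)"

lemma nets_affine: "f \<in> nets \<alpha> \<Longrightarrow> (\<lambda>x. c * f x + d) \<in> nets \<alpha>"
  unfolding nets_def using N1_affine by blast

lemma nets_leaky_relu: "f \<in> nets \<alpha> \<Longrightarrow> (\<lambda>x. c * leaky_relu \<alpha> (f x) + d) \<in> nets \<alpha>"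
  unfolding nets_def using N1_leaky_relu by blast

definition knee :: "real \<Rightarrow> real \<Rightarrow> real \<Rightarrow> real" where
  "knee \<rho> c y = (if y \<le> c then y else c + \<rho> * (y - c))"

lemma knee_below [simp]: "y \<le> c \<Longrightarrow> knee \<rho> c y = y"
  by (simp add: knee_def)

lemma knee_one [simp]: "knee 1 c y = y"
  by (simp add: knee_def)

lemma knee_knee: "0 < \<rho> \<Longrightarrow> 0 < \<sigma> \<Longrightarrow> knee \<rho> c (knee \<sigma> c y) = knee (\<rho> * \<sigma>) c y"
  by (auto simp: knee_def algebra_simps)

lemma strict_mono_knee:
  assumes "0 < \<rho>"
  shows "strict_mono (knee \<rho> c)"
proof (rule strict_monoI)
  fix x y :: real
  assume "x < y"
  then show "knee \<rho> c x < knee \<rho> c y"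
    using assms by (auto simp: knee_def) (smt (verit) mult_pos_pos)
qed

lemma leaky_relu_eq: "0 < \<alpha> \<Longrightarrow> \<alpha> < 1 \<Longrightarrow> leaky_relu \<alpha> y = (if y \<le> 0 then \<alpha> * y else y)"
  by (auto simp: leaky_relu_def max_def mult_le_cancel_right1 mult_le_cancel_right2)

lemma knee_alpha_eq: "0 < \<alpha> \<Longrightarrow> \<alpha> < 1 \<Longrightarrow> knee \<alpha> c y = (-1) * leaky_relu \<alpha> (c - y) + c"
  by (auto simp: leaky_relu_eq knee_def algebra_simps)

lemma knee_inverse_alpha_eq:
  "0 < \<alpha> \<Longrightarrow> \<alpha> < 1 \<Longrightarrow> knee (1 / \<alpha>) c y = (1 / \<alpha>) * leaky_relu \<alpha> (y - c) + c"
  by (auto simp: leaky_relu_eq knee_def field_simps)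

lemma nets_knee_power:
  assumes "0 < \<alpha>" "\<alpha> < 1" and \<beta>: "\<beta> = \<alpha> \<or> \<beta> = 1 / \<alpha>" and f: "f \<in> nets \<alpha>"
  shows "(\<lambda>x. knee (\<beta> ^ n) c (f x)) \<in> nets \<alpha>"
proof (induction n)
  case 0
  show ?case using f by simp
next
  case (Suc n)
  have "(\<lambda>x. knee \<beta> c (knee (\<beta> ^ n) c (f x))) \<in> nets \<alpha>"
  proof (cases "\<beta> = \<alpha>")
    case True
    show ?thesis
      using nets_leaky_relu[OF nets_affine[OF Suc], of "-1" "-1" c c]
      by (simp add: True knee_alpha_eq[OF assms(1,2)])
  next
    case False
    show ?thesis
      using nets_leaky_relu[OF nets_affine[OF Suc], of "1 / \<alpha>" 1 "-c" c] False \<beta>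
      by (simp add: knee_inverse_alpha_eq[OF assms(1,2)])
  qed
  moreover have "\<beta> > 0" using \<beta> assms(1) by auto
  ultimately show ?case by (simp add: knee_knee)
qed

lemma knee_through_point:
  assumes "0 < \<rho>" "c < T" "T < G" "\<rho> * (G - c) \<le> T - c"
  shows "\<exists>c' \<ge> c. knee \<rho> c' G = T"
proof -
  have "\<rho> < 1" using assms by (smt (verit) mult_less_cancel_right2)
  define c' where "c' = (T - \<rho> * G) / (1 - \<rho>)"
  have "c \<le> c'" using assms \<open>\<rho> < 1\<close> by (simp add: c'_def le_divide_eq algebra_simps)
  have "c' < G" using assms \<open>\<rho> < 1\<close> by (simp add: c'_def divide_less_eq algebra_simps)
  then have "knee \<rho> c' G = c' * (1 - \<rho>) + \<rho> * G" by (simp add: knee_def algebra_simps)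
  also have "\<dots> = T" using \<open>\<rho> < 1\<close> by (simp add: c'_def)
  finally show ?thesis using \<open>c \<le> c'\<close> by blast
qed

lemma nets_reach:
  assumes \<alpha>: "0 < \<alpha>" "\<alpha> < 1" and g: "g \<in> nets \<alpha>" "strict_mono g"
    and "t < s" "g t < T"
  shows "\<exists>h \<in> nets \<alpha>. strict_mono h \<and> (\<forall>z \<le> t. h z = g z) \<and> h s = T"
proof -
  define c where "c = g t"
  have "c < g s" using g(2) \<open>t < s\<close> by (simp add: c_def strict_mono_less)
  have "c < T" using \<open>g t < T\<close> by (simp add: c_def)
  have "1 < 1 / \<alpha>" using \<alpha> by simp
  then obtain N where "(T - c) / (g s - c) < (1 / \<alpha>) ^ N" using real_arch_pow by blast
  define E where "E = (1 / \<alpha>) ^ N"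
  define G where "G = c + E * (g s - c)"
  have up: "knee E c (g s) = G" using \<open>c < g s\<close> by (simp add: knee_def G_def)
  have "T - c < E * (g s - c)"
    using \<open>(T - c) / (g s - c) < (1 / \<alpha>) ^ N\<close> \<open>c < g s\<close>
    by (simp add: pos_divide_less_eq flip: E_def)
  then have "T < G" by (simp add: G_def)
  have "0 < (T - c) / (G - c)" using \<open>c < T\<close> \<open>T < G\<close> by simp
  then obtain M where "\<alpha> ^ M < (T - c) / (G - c)" using real_arch_pow_inv \<alpha>(2) by blast
  then have "\<alpha> ^ M * (G - c) \<le> T - c"
    using \<open>c < T\<close> \<open>T < G\<close> by (simp add: pos_less_divide_eq)
  then obtain c' where "c \<le> c'" and down: "knee (\<alpha> ^ M) c' G = T"
    using knee_through_point[of "\<alpha> ^ M" c T G] \<alpha>(1) \<open>c < T\<close> \<open>T < G\<close> by auto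
  define h where "h x = knee (\<alpha> ^ M) c' (knee E c (g x))" for x
  have "h \<in> nets \<alpha>"
    unfolding h_def E_def using nets_knee_power[OF \<alpha> _ nets_knee_power[OF \<alpha> _ g(1)]] by blast
  moreover have "strict_mono h"
  proof -
    have "0 < \<alpha> ^ M" "0 < E" using \<alpha>(1) by (simp_all add: E_def)
    then show ?thesis
      unfolding h_def by (intro strict_mono_compose[OF strict_mono_knee] g(2))
  qed
  moreover have "h z = g z" if "z \<le> t" for z
  proof -
    have "g z \<le> c" using g(2) that by (simp add: c_def strict_mono_less_eq)
    then show ?thesis using \<open>c \<le> c'\<close> by (simp add: h_def)
  qed
  ultimately show ?thesis using up down by (auto simp: h_def)
qed

lemma nets_interpolate:
  assumes \<alpha>: "0 < \<alpha>" "\<alpha> < 1" and x: "strict_mono x"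
    and "\<And>j. j < n \<Longrightarrow> T j < T (Suc j)"
  shows "\<exists>g \<in> nets \<alpha>. strict_mono g \<and> (\<forall>j \<le> n. g (x j) = T j)"
  using assms(4)
proof (induction n)
  case 0
  have "(\<lambda>z. 1 * z + (T 0 - x 0)) \<in> nets \<alpha>"
    using affine_in_N1 unfolding nets_def by blast
  moreover have "strict_mono (\<lambda>z::real. 1 * z + (T 0 - x 0))"
    by (simp add: strict_mono_def)
  ultimately show ?case by auto
next
  case (Suc n)
  then obtain g where g: "g \<in> nets \<alpha>" "strict_mono g" and gx: "\<forall>j \<le> n. g (x j) = T j"
    by auto
  have "x n < x (Suc n)" using x by (simp add: strict_mono_Suc_iff)
  moreover have "g (x n) < T (Suc n)" using gx Suc.prems by simp
  ultimately obtain h where h: "h \<in> nets \<alpha>" "strict_mono h"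
    and left: "\<forall>z \<le> x n. h z = g z" and "h (x (Suc n)) = T (Suc n)"
    using nets_reach[OF \<alpha> g] by blast
  moreover have "h (x j) = T j" if "j \<le> n" for j
    using that left gx x by (simp add: strict_mono_less_eq)
  ultimately show ?case by (auto simp: le_Suc_eq)
qed

lemma mono_between_error:
  fixes f g :: "real \<Rightarrow> real"
  assumes "u \<le> y" "y \<le> v" "mono_on {u..v} f" "mono_on {u..v} g"
  shows "\<bar>g y - f y\<bar> \<le> max \<bar>g u - f u\<bar> \<bar>g v - f v\<bar> + (f v - f u)"
proof -
  have "f u \<le> f y" "f y \<le> f v" "g u \<le> g y" "g y \<le> g v"
    using assms by (auto intro: mono_onD)
  then show ?thesis by (simp add: abs_le_iff max_def) linarith
qed

lemma grid_cover:
  fixes x :: "nat \<Rightarrow> 'a::linorder"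
  assumes "x 0 \<le> y" "y \<le> x n" "0 < n"
  shows "\<exists>k < n. x k \<le> y \<and> y \<le> x (Suc k)"
  using assms(2,3)
proof (induction n)
  case 0
  then show ?case by simp
next
  case (Suc m)
  show ?case
  proof (cases "y \<le> x m \<and> 0 < m")
    case True
    then show ?thesis using Suc.IH less_SucI by blast
  next
    case False
    then have "x m \<le> y" using assms(1) by auto
    then show ?thesis using Suc.prems by auto
  qed
qed

lemma nets_approx_mono:
  fixes f :: "real \<Rightarrow> real"
  assumes \<alpha>: "0 < \<alpha>" "\<alpha> < 1" and "a < b"
    and cont: "continuous_on {a..b} f" and mono: "mono_on {a..b} f" and "0 < \<epsilon>"
  shows "\<exists>g \<in> nets \<alpha>. \<forall>y \<in> {a..b}. \<bar>g y - f y\<bar> \<le> \<epsilon>"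
proof -
  have "uniformly_continuous_on {a..b} f"
    by (rule compact_uniformly_continuous[OF cont compact_Icc])
  then obtain d where "0 < d"
    and d: "\<forall>y \<in> {a..b}. \<forall>y' \<in> {a..b}. \<bar>y' - y\<bar> < d \<longrightarrow> \<bar>f y' - f y\<bar> < \<epsilon> / 2"
    using \<open>0 < \<epsilon>\<close> unfolding uniformly_continuous_on_def dist_real_def
    by (meson half_gt_zero)
  obtain n :: nat where n: "(b - a) / d < real n" using reals_Archimedean2 by blast
  moreover have "0 < (b - a) / d" using \<open>a < b\<close> \<open>0 < d\<close> by simp
  ultimately have "0 < n" by simp
  define h where "h = (b - a) / real n"
  have "0 < h" "h < d"
    using \<open>a < b\<close> \<open>0 < n\<close> n \<open>0 < d\<close> by (simp_all add: h_def divide_less_eq mult.commute)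
  define x where "x i = a + real i * h" for i
  have "strict_mono x" using \<open>0 < h\<close> by (simp add: strict_mono_def x_def)
  have "x 0 = a" "x n = b" using \<open>0 < n\<close> by (simp_all add: x_def h_def)
  have x_in: "x i \<in> {a..b}" if "i \<le> n" for i
    using that \<open>x 0 = a\<close> \<open>x n = b\<close> strict_mono_less_eq[OF \<open>strict_mono x\<close>, of 0 i]
      strict_mono_less_eq[OF \<open>strict_mono x\<close>, of i n]
    by simp
  \<comment> \<open>The tilt by i * \<delta> makes the data strictly increasing at a total cost of \<epsilon>/2.\<close>
  define \<delta> where "\<delta> = \<epsilon> / (2 * real n)"
  have "0 < \<delta>" "real n * \<delta> = \<epsilon> / 2" using \<open>0 < \<epsilon>\<close> \<open>0 < n\<close> by (simp_all add: \<delta>_def)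
  define T where "T i = f (x i) + real i * \<delta>" for i
  have "T j < T (Suc j)" if "j < n" for j
  proof -
    have "f (x j) \<le> f (x (Suc j))"
      using mono_onD[OF mono x_in x_in] that \<open>strict_mono x\<close> by (simp add: strict_mono_less_eq)
    then show ?thesis using \<open>0 < \<delta>\<close> by (simp add: T_def algebra_simps)
  qed
  then obtain g where "g \<in> nets \<alpha>" "strict_mono g" and gx: "\<forall>j \<le> n. g (x j) = T j"
    using nets_interpolate[OF \<alpha> \<open>strict_mono x\<close>] by blast
  have node_error: "\<bar>g (x j) - f (x j)\<bar> \<le> \<epsilon> / 2" if "j \<le> n" for j
  proof -
    have "real j * \<delta> \<le> real n * \<delta>" using that \<open>0 < \<delta>\<close> by simp
    then show ?thesis using that gx \<open>0 < \<delta>\<close> \<open>real n * \<delta> = \<epsilon> / 2\<close> by (simp add: T_def)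
  qed
  have "\<bar>g y - f y\<bar> \<le> \<epsilon>" if "y \<in> {a..b}" for y
  proof -
    have "x 0 \<le> y" "y \<le> x n" using that \<open>x 0 = a\<close> \<open>x n = b\<close> by simp_all
    then obtain k where "k < n" and y: "x k \<le> y" "y \<le> x (Suc k)"
      using grid_cover \<open>0 < n\<close> by blast
    have cell: "{x k..x (Suc k)} \<subseteq> {a..b}"
      using x_in[of k] x_in[of "Suc k"] \<open>k < n\<close> by auto
    have "\<bar>g y - f y\<bar> \<le> max \<bar>g (x k) - f (x k)\<bar> \<bar>g (x (Suc k)) - f (x (Suc k))\<bar>
        + (f (x (Suc k)) - f (x k))"
      using y mono_on_subset[OF mono cell] \<open>strict_mono g\<close>
      by (intro mono_between_error) (auto intro: strict_mono_mono mono_imp_mono_on)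
    moreover have "\<bar>x (Suc k) - x k\<bar> < d"
      using \<open>0 < h\<close> \<open>h < d\<close> by (simp add: x_def algebra_simps)
    then have "\<bar>f (x (Suc k)) - f (x k)\<bar> < \<epsilon> / 2"
      using d x_in \<open>k < n\<close> by simp
    moreover have "\<bar>g (x k) - f (x k)\<bar> \<le> \<epsilon> / 2" "\<bar>g (x (Suc k)) - f (x (Suc k))\<bar> \<le> \<epsilon> / 2"
      using node_error \<open>k < n\<close> by simp_all
    ultimately show ?thesis by linarith
  qed
  then show ?thesis using \<open>g \<in> nets \<alpha>\<close> by blast
qed

theorem mainTheorem2:
  fixes \<alpha> a b \<epsilon> :: real and fstar :: "real \<Rightarrow> real"
  assumes "0 < \<alpha>" "\<alpha> < 1" "a \<le> b"
    and "continuous_on {a..b} fstar"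
    and "mono_on {a..b} fstar \<or> antimono_on {a..b} fstar"
    and "\<epsilon> > 0"
  shows "\<exists>L::nat. \<exists>f \<in> N1 \<alpha> L. \<forall>x \<in> {a..b}. \<bar>f x - fstar x\<bar> \<le> \<epsilon>"
proof -
  have "\<exists>f \<in> nets \<alpha>. \<forall>x \<in> {a..b}. \<bar>f x - fstar x\<bar> \<le> \<epsilon>"
  proof (cases "a = b")
    case True
    then show ?thesis
      using affine_in_N1[of 0 "fstar a" \<alpha>] \<open>\<epsilon> > 0\<close> unfolding nets_def by force
  next
    case False
    with \<open>a \<le> b\<close> have "a < b" by simp
    note approx = nets_approx_mono[OF assms(1,2) \<open>a < b\<close> _ _ \<open>\<epsilon> > 0\<close>]
    from assms(5) show ?thesis
    proof
      assume "mono_on {a..b} fstar"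
      then show ?thesis using approx assms(4) by blast
    next
      assume "antimono_on {a..b} fstar"
      then have "mono_on {a..b} (\<lambda>x. - fstar x)" by (simp add: monotone_on_def)
      moreover have "continuous_on {a..b} (\<lambda>x. - fstar x)" using assms(4) by (intro continuous_intros)
      ultimately obtain g where "g \<in> nets \<alpha>" "\<forall>x \<in> {a..b}. \<bar>g x - - fstar x\<bar> \<le> \<epsilon>"
        using approx by blast
      then show ?thesis
        using nets_affine[of g \<alpha> "-1" 0] by (intro bexI[of _ "\<lambda>x. - g x"]) (auto simp: abs_minus_commute)
    qed
  qed
  then show ?thesis unfolding nets_def by blast
qed

end
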